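(* With the notation of the context, let $\mathcal{P}$ be a unital partition of $G=\mu_{p^n}$ ($p$ an odd prime) and $0\le k\le n$ such that $\mathcal{P}_k\cap\mathcal{P}_l=\emptyset$ for all $l\ne k$. Then $B_{i,k}=A_{i,k}$ for all $i$.
   Context: A unital partition of a finite commutative group $G$ is a partition $G=\{1\}\sqcup A_0\sqcup\dots\sqcup A_s$ such that, with $a_i=\sum_{x\in A_i}x\in\mathbb{Z}[G]$, the $\mathbb{Z}$-span of $1$ and the $a_i$ is closed under multiplication in $\mathbb{Z}[G]$. Fix $\alpha$ an integer generating $(\mathbb{Z}/p^n\mathbb{Z})^\times$. $B_k=\{x^{p^k}\mid x\text{ a generator of }G\}$, $\mathcal{P}_k=\{A\in\mathcal{P}\mid A\cap B_k\neq\emptyset\}$. Fix $A\in\mathcal{P}_k$, $y\in A\cap B_k$; $u_k$ is the smallest positive integer with $y^{\alpha^{u_k}}\in A$, $\beta_k=\alpha^{u_k}$, $r_k+1=\phi(p^{n-k})/u_k$. For $X\subseteq G$, $X^m=\{x^m:x\in X\}$. $A_{i,k}=A^{\alpha^i}$, $B_{0,k}=\{y,y^{\beta_k},\dots,y^{\beta_k^{r_k}}\}$, $B_{i,k}=B_{0,k}^{\alpha^i}$. *)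

theory Defs
  imports "HOL-Number_Theory.Number_Theory"
begin

text \<open>The group G = mu_(p^n), realised as the complex p^n-th roots of unity.\<close>
definition mu :: "nat \<Rightarrow> complex set" where
  "mu m = {z. z ^ m = 1}"

text \<open>Multiplication in the group ring Z[G]; elements are functions G -> int (zero outside G).\<close>
definition gr_mult :: "complex set \<Rightarrow> (complex \<Rightarrow> int) \<Rightarrow> (complex \<Rightarrow> int) \<Rightarrow> (complex \<Rightarrow> int)" where
  "gr_mult G f g = (\<lambda>z. if z \<in> G then (\<Sum>x\<in>G. f x * g (z / x)) else 0)"

text \<open>Z-span of the identity element 1 and the class sums a_A (A in P).\<close>
definition zspan :: "complex set set \<Rightarrow> (complex \<Rightarrow> int) set" where
  "zspan P = {f. \<exists>(c0::int) (c::complex set \<Rightarrow> int).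
      f = (\<lambda>z. c0 * of_bool (z = 1) + (\<Sum>A\<in>P. c A * of_bool (z \<in> A)))}"

text \<open>P is the set of non-trivial parts A_0,...,A_s, so that G = {1} + A_0 + ... + A_s.\<close>
definition unital_partition :: "complex set \<Rightarrow> complex set set \<Rightarrow> bool" where
  "unital_partition G P \<longleftrightarrow>
     (\<forall>A\<in>P. A \<noteq> {}) \<and> (\<forall>A\<in>P. \<forall>B\<in>P. A \<noteq> B \<longrightarrow> A \<inter> B = {}) \<and> \<Union>P = G - {1} \<and>
     (\<forall>f\<in>zspan P. \<forall>g\<in>zspan P. gr_mult G f g \<in> zspan P)"

definition is_generator :: "complex set \<Rightarrow> complex \<Rightarrow> bool" where
  "is_generator G x \<longleftrightarrow> x \<in> G \<and> (\<forall>z\<in>G. \<exists>j::nat. z = x ^ j)"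

definition Bset :: "complex set \<Rightarrow> nat \<Rightarrow> nat \<Rightarrow> complex set" where
  "Bset G p k = {x ^ (p ^ k) | x. is_generator G x}"

definition Pset :: "complex set \<Rightarrow> complex set set \<Rightarrow> nat \<Rightarrow> nat \<Rightarrow> complex set set" where
  "Pset G P p k = {A \<in> P. A \<inter> Bset G p k \<noteq> {}}"

definition set_pow :: "complex set \<Rightarrow> int \<Rightarrow> complex set" where
  "set_pow X m = (\<lambda>x. x powi m) ` X"

definition generates_units :: "nat \<Rightarrow> int \<Rightarrow> bool" where
  "generates_units m \<alpha> \<longleftrightarrow> coprime \<alpha> (int m) \<and>
     (\<forall>b::int. coprime b (int m) \<longrightarrow> (\<exists>i::nat. [\<alpha> ^ i = b] (mod int m)))"

end

theory Submission
  imports Defs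
begin

text \<open>
  We show that A is the orbit B_{0,k} of y under
  x \<mapsto> x^\<beta>, with \<beta> = \<alpha>^u; in particular B_{i,k} = A_{i,k} for every i.

  The main tool is Schur's theorem on multipliers: if X is a union of parts and m is prime to
  |G|, then X^m is again a union of parts. For a prime q this follows from the Frobenius
  congruence (a_C)^q \<equiv> a_{C^q} (mod q) in Z[G], which we obtain by letting the cyclic shift act
  on the q-tuples of elements of C with a given product; the general case follows by
  factoring m. Applied to A and \<beta> it shows that A^\<beta> = A and that the exponents i with
  y^(\<alpha>^i) in A are exactly the multiples of u. On the other hand the hypothesis on the P_l
  forces A \<subseteq> B_k, and B_k consists of the elements y^(\<alpha>^i) with i < \<phi>(p^(n-k)).
  Combining the two descriptions gives A = B_{0,k}.
\<close>

lemma funpow_gcd_fix: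
  assumes "(f ^^ a) x = x" "(f ^^ b) x = x" "a \<noteq> 0"
  shows "(f ^^ gcd a b) x = x"
proof -
  obtain s t where st: "a * s = b * t + gcd a b" using bezout_nat[OF assms(3)] by blast
  have "x = (f ^^ (a * s)) x" using funpow_mod_eq[OF assms(1), of "a * s"] by simp
  also have "\<dots> = (f ^^ gcd a b) ((f ^^ (b * t)) x)"
    by (simp only: st add.commute[of "b * t"] funpow_add o_apply)
  also have "(f ^^ (b * t)) x = x" using funpow_mod_eq[OF assms(2), of "b * t"] by simp
  finally show ?thesis by simp
qed

lemma funpow_fixed: "f z = z \<Longrightarrow> (f ^^ m) z = z"
  by (induction m) auto

lemma prime_period_orbit:
  fixes f :: "'a \<Rightarrow> 'a"
  assumes q: "prime q" and S: "f ` S \<subseteq> S" and period: "\<And>z. z \<in> S \<Longrightarrow> (f ^^ q) z = z"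
    and x: "x \<in> S" "f x \<noteq> x"
  defines "Orb \<equiv> (\<lambda>i. (f ^^ i) x) ` {0..<q}"
  shows "card Orb = q" "Orb \<subseteq> S" "f ` (S - Orb) \<subseteq> S - Orb" "\<forall>z\<in>Orb. f z \<noteq> z"
proof -
  have q1: "q > 1" using q prime_gt_1_nat by blast
  have xq: "(f ^^ q) x = x" using period[OF x(1)] .
  have "(f ^^ m) x \<noteq> x" if m: "0 < m" "m < q" for m
  proof
    assume mx: "(f ^^ m) x = x"
    have "gcd m q = 1"
      using m q by (metis coprime_commute coprime_iff_gcd_eq_1 dvd_imp_le not_le prime_imp_coprime)
    then have "(f ^^ 1) x = x" using funpow_gcd_fix[OF mx xq] m by simp
    with x(2) show False by simp
  qed
  then have "inj_on (\<lambda>i. (f ^^ i) x) {0..<q}" using inj_on_funpow_least[OF xq] by blast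
  then show "card Orb = q" unfolding Orb_def by (simp add: card_image)
  have iter_S: "(f ^^ i) z \<in> S" if "z \<in> S" for i z
    using that S by (induction i) auto
  then show "Orb \<subseteq> S" unfolding Orb_def using x(1) by auto
  have step: "f z \<in> Orb" if "z \<in> Orb" for z
  proof -
    obtain i where "z = (f ^^ i) x" using \<open>z \<in> Orb\<close> unfolding Orb_def by blast
    then have "f z = (f ^^ (Suc i mod q)) x" using funpow_mod_eq[OF xq, of "Suc i"] by simp
    then show ?thesis unfolding Orb_def using q1 by auto
  qed
  have iter_Orb: "(f ^^ i) z \<in> Orb" if "z \<in> Orb" for i z
    using that step by (induction i) auto
  show "f ` (S - Orb) \<subseteq> S - Orb"
  proof (intro subsetI, elim imageE)
    fix z s assume z: "z = f s" and s: "s \<in> S - Orb"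
    have "s = (f ^^ (q - 1)) (f s)"
      using period[of s] s q1 by (metis DiffD1 Suc_diff_1 funpow_Suc_right o_apply zero_less_one order.strict_trans)
    then have "f s \<notin> Orb" using s iter_Orb[of "f s" "q - 1"] by auto
    then show "z \<in> S - Orb" using z s S by auto
  qed
  show "\<forall>z\<in>Orb. f z \<noteq> z"
  proof (intro ballI notI)
    fix z assume "z \<in> Orb" "f z = z"
    then obtain i where i: "i < q" "z = (f ^^ i) x" unfolding Orb_def by auto
    have "x = (f ^^ (q - i)) ((f ^^ i) x)"
      using xq i(1) by (simp add: funpow_add[symmetric, THEN fun_cong, simplified])
    also have "\<dots> = z" using i(2) funpow_fixed[of f z, OF \<open>f z = z\<close>] by simp
    finally show False using x(2) \<open>f z = z\<close> by simp
  qed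
qed

lemma card_cong_fixed_points:
  fixes f :: "'a \<Rightarrow> 'a"
  assumes q: "prime q" and S: "finite S" "f ` S \<subseteq> S" and period: "\<And>z. z \<in> S \<Longrightarrow> (f ^^ q) z = z"
  shows "[card S = card {z\<in>S. f z = z}] (mod q)"
  using S period
proof (induction "card S" arbitrary: S rule: less_induct)
  case less
  show ?case
  proof (cases "\<forall>z\<in>S. f z = z")
    case True
    then show ?thesis by (simp add: Collect_conj_eq Int_absorb2 subset_eq)
  next
    case False
    then obtain x where x: "x \<in> S" "f x \<noteq> x" by blast
    define Orb where "Orb = (\<lambda>i. (f ^^ i) x) ` {0..<q}"
    note orbit = prime_period_orbit[OF q less.prems(2) less.prems(3) x, folded Orb_def]
    have q1: "q > 1" using q prime_gt_1_nat by blast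
    have card_S: "card S = card (S - Orb) + q"
      using orbit(1,2) less.prems(1) by (metis card_Diff_subset card_mono finite_subset le_add_diff_inverse2)
    have "[card (S - Orb) = card {z\<in>S - Orb. f z = z}] (mod q)"
      using less.hyps[of "S - Orb"] card_S q1 orbit(3) less.prems(1,3) by auto
    moreover have "{z\<in>S - Orb. f z = z} = {z\<in>S. f z = z}" using orbit(4) by auto
    ultimately show ?thesis using card_S by (simp add: cong_def)
  qed
qed

lemma mu_nonzero: "N > 0 \<Longrightarrow> x \<in> mu N \<Longrightarrow> x \<noteq> 0"
  by (auto simp: mu_def power_0_left)

lemma mu_finite: "N > 0 \<Longrightarrow> finite (mu N)"
  unfolding mu_def by (rule finite_roots_unity) simp

lemma mu_card: "N > 0 \<Longrightarrow> card (mu N) = N"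
  unfolding mu_def by (rule card_roots_unity_eq)

lemma mu_power: "x \<in> mu N \<Longrightarrow> x ^ m \<in> mu N"
  by (simp add: mu_def flip: power_mult) (simp add: mult.commute[of m] power_mult)

lemma mu_divide: "x \<in> mu N \<Longrightarrow> y \<in> mu N \<Longrightarrow> x / y \<in> mu N"
  by (simp add: mu_def power_divide)

lemma power_mod_order:
  fixes y :: "'a :: monoid_mult"
  assumes "y ^ K = 1"
  shows "y ^ a = y ^ (a mod K)"
  by (metis assms mod_mult_div_eq mult_1_right power_add power_mult power_one)

lemma power_int_cong:
  fixes y :: complex
  assumes "y \<noteq> 0" "y ^ K = 1" "[a = b] (mod int K)"
  shows "y powi a = y powi b"
proof -
  obtain t where t: "b = a + int K * t" using assms(3) cong_iff_lin by blast
  have "y powi (int K * t) = 1" by (simp add: power_int_mult assms(2))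
  then show ?thesis using t assms(1) by (simp add: power_int_add)
qed

lemma mu_power_int:
  assumes "N > 0" "y \<in> mu N"
  shows "y powi m = y ^ nat (m mod int N)"
proof -
  have "y powi m = y powi (m mod int N)"
    using assms by (intro power_int_cong[of _ N]) (auto simp: mu_def mu_nonzero cong_def)
  also have "m mod int N = int (nat (m mod int N))" using assms(1) by simp
  finally show ?thesis by (simp only: power_int_of_nat)
qed

lemma mu_power_int_closed: "N > 0 \<Longrightarrow> y \<in> mu N \<Longrightarrow> y powi m \<in> mu N"
  using mu_power_int mu_power by metis

lemma mu_power_int_inj:
  assumes "N > 0" "y \<in> mu N" "w \<in> mu N" "coprime m (int N)" "y powi m = w powi m"
  shows "y = w"
proof -
  obtain m' where m': "[m * m' = 1] (mod int N)" using cong_solve_coprime_int[OF assms(4)] by blast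
  have yw: "y \<noteq> 0" "y ^ N = 1" "w \<noteq> 0" "w ^ N = 1" using assms mu_nonzero by (auto simp: mu_def)
  have "y = y powi (m * m')" using power_int_cong[OF yw(1,2) m'] by simp
  also have "\<dots> = w powi (m * m')" by (simp add: power_int_mult assms(5))
  also have "\<dots> = w" using power_int_cong[OF yw(3,4) m'] by simp
  finally show ?thesis .
qed

lemma generator_basic:
  assumes "N > 0" "is_generator (mu N) w"
  shows "w \<in> mu N" "w \<noteq> 0" "w ^ N = 1"
  using assms mu_nonzero by (auto simp: is_generator_def mu_def)

lemma generator_order:
  assumes N: "N > 0" and g: "is_generator (mu N) w" and m: "w ^ m = 1"
  shows "N dvd m"
proof -
  define d where "d = gcd N m"
  obtain s t where st: "N * s = m * t + d" using bezout_nat[of N m] N unfolding d_def by auto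
  have "1 = w ^ (N * s)" by (simp add: power_mult generator_basic[OF N g])
  also have "\<dots> = w ^ d" by (simp add: st power_add power_mult m)
  finally have wd: "w ^ d = 1" by simp
  have d0: "d > 0" using N unfolding d_def by simp
  have "mu N \<subseteq> (\<lambda>j. w ^ j) ` {..<d}"
  proof
    fix z assume "z \<in> mu N"
    then obtain j where "z = w ^ j" using g unfolding is_generator_def by blast
    then show "z \<in> (\<lambda>j. w ^ j) ` {..<d}" using power_mod_order[OF wd, of j] d0 by auto
  qed
  then have "card (mu N) \<le> card ((\<lambda>j. w ^ j) ` {..<d})" by (intro card_mono) auto
  also have "\<dots> \<le> d" using card_image_le[of "{..<d}" "\<lambda>j. w ^ j"] by simp
  finally have "N \<le> d" using mu_card[OF N] by simp
  then have "d = N" using N unfolding d_def by (simp add: dvd_imp_le le_antisym)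
  then show ?thesis unfolding d_def by (metis gcd_dvd2)
qed

lemma generator_power:
  assumes N: "N > 0" and g: "is_generator (mu N) w" and e: "coprime e N"
  shows "is_generator (mu N) (w ^ e)"
  unfolding is_generator_def
proof (intro conjI ballI)
  show "w ^ e \<in> mu N" using generator_basic[OF N g] mu_power by blast
  fix z assume "z \<in> mu N"
  then obtain j where j: "z = w ^ j" using g unfolding is_generator_def by blast
  obtain t where t: "[e * t = 1] (mod N)" using cong_solve_coprime_nat[OF e] by auto
  have wN: "w ^ N = 1" using generator_basic[OF N g] by simp
  have "(w ^ e) ^ (t * j) = w ^ ((e * t * j) mod N)"
    using power_mod_order[OF wN, of "e * t * j"] by (simp add: power_mult mult.assoc)
  also have "(e * t * j) mod N = j mod N" using cong_mult[OF t cong_refl[of j]] by (simp add: cong_def)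
  also have "w ^ (j mod N) = z" using j power_mod_order[OF wN, of j] by simp
  finally show "\<exists>j. z = (w ^ e) ^ j" by metis
qed

lemma generator_power_coprime:
  assumes N: "N > 0" and g: "is_generator (mu N) w" and ga: "is_generator (mu N) (w ^ a)"
  shows "coprime a N"
proof -
  define d where "d = gcd a N"
  obtain a' N' where a': "a = d * a'" and N': "N = d * N'"
    unfolding d_def by (meson dvdE gcd_dvd1 gcd_dvd2)
  have N'0: "N' > 0" using N N' by simp
  have "a * N' = N * a'" using a' N' by simp
  then have "(w ^ a) ^ N' = (w ^ N) ^ a'" by (simp only: power_mult[symmetric])
  then have "(w ^ a) ^ N' = 1" using generator_basic[OF N g] by simp
  then have "N \<le> N'" using generator_order[OF N ga] N'0 by (simp add: dvd_imp_le)
  then have "d = 1" using N N' by (cases d) auto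
  then show ?thesis using d_def coprime_iff_gcd_eq_1 by metis
qed

lemma unital_partition_finite:
  assumes "unital_partition (mu N) P" "N > 0"
  shows "finite P"
proof -
  have "P \<subseteq> Pow (mu N)" using assms(1) unfolding unital_partition_def by auto
  then show ?thesis using mu_finite[OF assms(2)] by (meson finite_Pow_iff finite_subset)
qed

lemma unital_partition_part: "unital_partition G P \<Longrightarrow> B \<in> P \<Longrightarrow> B \<subseteq> G - {1}"
  unfolding unital_partition_def by auto

lemma zspan_constant_on_part:
  assumes "unital_partition G P" "finite P" "f \<in> zspan P" "D \<in> P"
  shows "\<exists>c. \<forall>z\<in>D. f z = c"
proof -
  obtain c0 c where f: "f = (\<lambda>z. c0 * of_bool (z = 1) + (\<Sum>A\<in>P. c A * of_bool (z \<in> A)))"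
    using assms(3) unfolding zspan_def by blast
  have "f z = c D" if "z \<in> D" for z
  proof -
    have "(\<Sum>A\<in>P. c A * of_bool (z \<in> A)) = (\<Sum>A\<in>P. if A = D then c D else 0)"
      using assms(1,4) that unfolding unital_partition_def by (intro sum.cong) auto
    then show ?thesis using f assms(2,4) unital_partition_part[OF assms(1,4)] that by auto
  qed
  then show ?thesis by blast
qed

lemma part_indicator_zspan:
  assumes "finite P" "C \<in> P"
  shows "(\<lambda>z. of_bool (z \<in> C)) \<in> zspan P"
proof -
  have "(\<Sum>A\<in>P. (of_bool (A = C)::int) * of_bool (z \<in> A)) = (\<Sum>A\<in>P. if A = C then of_bool (z \<in> C) else 0)" for z
    by (intro sum.cong) auto
  then have "(\<Sum>A\<in>P. (of_bool (A = C)::int) * of_bool (z \<in> A)) = of_bool (z \<in> C)" for z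
    using assms by simp
  then show ?thesis unfolding zspan_def by (intro CollectI exI[of _ 0] exI[of _ "\<lambda>A. of_bool (A = C)"]) auto
qed

lemma unit_zspan: "(\<lambda>z. of_bool (z = 1)) \<in> zspan P"
  unfolding zspan_def by (intro CollectI exI[of _ 1] exI[of _ "\<lambda>A. 0"]) simp

fun class_sum_power :: "complex set \<Rightarrow> complex set \<Rightarrow> nat \<Rightarrow> complex \<Rightarrow> int" where
  "class_sum_power G C 0 = (\<lambda>z. of_bool (z = 1))"
| "class_sum_power G C (Suc m) = gr_mult G (\<lambda>z. of_bool (z \<in> C)) (class_sum_power G C m)"

lemma class_sum_power_zspan:
  assumes "unital_partition G P" "finite P" "C \<in> P"
  shows "class_sum_power G C m \<in> zspan P"
  using assms part_indicator_zspan[OF assms(2,3)] unit_zspan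
  by (induction m) (auto simp: unital_partition_def)

definition prod_tuples :: "complex set \<Rightarrow> nat \<Rightarrow> complex \<Rightarrow> complex list set" where
  "prod_tuples C m z = {xs. length xs = m \<and> set xs \<subseteq> C \<and> prod_list xs = z}"

lemma prod_tuples_finite: "finite C \<Longrightarrow> finite (prod_tuples C m z)"
  unfolding prod_tuples_def by (rule finite_subset[OF _ finite_lists_length_eq[of C m]]) auto

lemma prod_tuples_Suc:
  assumes "0 \<notin> C"
  shows "prod_tuples C (Suc m) z = (\<Union>x\<in>C. (Cons x) ` prod_tuples C m (z / x))"
proof (intro equalityI subsetI)
  fix xs assume xs: "xs \<in> prod_tuples C (Suc m) z"
  then obtain x ys where xy: "xs = x # ys" unfolding prod_tuples_def by (cases xs) auto
  then have "x \<in> C" "x \<noteq> 0" using xs assms unfolding prod_tuples_def by auto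
  then have "ys \<in> prod_tuples C m (z / x)" using xs xy unfolding prod_tuples_def by auto
  then show "xs \<in> (\<Union>x\<in>C. (Cons x) ` prod_tuples C m (z / x))"
    using xy \<open>x \<in> C\<close> by auto
qed (use assms in \<open>auto simp: prod_tuples_def\<close>)

lemma class_sum_power_count:
  assumes N: "N > 0" and C: "C \<subseteq> mu N" and z: "z \<in> mu N"
  shows "class_sum_power (mu N) C m z = int (card (prod_tuples C m z))"
  using z
proof (induction m arbitrary: z)
  case 0
  have "prod_tuples C 0 z = (if z = 1 then {[]} else {})" unfolding prod_tuples_def by auto
  then show ?case by simp
next
  case (Suc m)
  have fC: "finite C" using finite_subset[OF C mu_finite[OF N]] .
  have C0: "0 \<notin> C" using C mu_nonzero[OF N] by blast
  have "class_sum_power (mu N) C (Suc m) z = (\<Sum>x\<in>mu N. of_bool (x \<in> C) * class_sum_power (mu N) C m (z / x))"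
    using Suc.prems by (simp add: gr_mult_def)
  also have "\<dots> = (\<Sum>x\<in>mu N. if x \<in> C then class_sum_power (mu N) C m (z / x) else 0)"
    by (intro sum.cong) auto
  also have "\<dots> = (\<Sum>x\<in>C. class_sum_power (mu N) C m (z / x))"
    using mu_finite[OF N] C by (simp add: sum.inter_restrict[symmetric] Int_absorb1)
  also have "\<dots> = (\<Sum>x\<in>C. int (card (prod_tuples C m (z / x))))"
    using Suc.IH Suc.prems C mu_divide by (intro sum.cong) auto
  also have "\<dots> = int (\<Sum>x\<in>C. card ((Cons x) ` prod_tuples C m (z / x)))"
    by (simp add: card_image)
  also have "(\<Sum>x\<in>C. card ((Cons x) ` prod_tuples C m (z / x))) = card (prod_tuples C (Suc m) z)"
    unfolding prod_tuples_Suc[OF C0] using fC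
    by (intro card_UN_disjoint[symmetric]) (auto intro: prod_tuples_finite)
  finally show ?case .
qed

lemma rotate1_fixed_replicate:
  assumes "rotate1 xs = xs"
  shows "\<exists>x. xs = replicate (length xs) x"
proof (cases xs)
  case (Cons x ys)
  have "ys @ [x] = x # ys \<Longrightarrow> x # ys = replicate (Suc (length ys)) x"
    by (induction ys) auto
  then show ?thesis using assms Cons by auto
qed simp

lemma prod_list_rotate1: "prod_list (rotate1 xs) = prod_list (xs :: complex list)"
  by (cases xs) (auto simp: mult.commute)

text \<open>Counting q-tuples modulo a prime q through the cyclic rotation, whose fixed points are
  the constant tuples: this is the Frobenius congruence for the q-th power of a class sum.\<close>
lemma prod_tuples_prime_cong:
  assumes N: "N > 0" and C: "C \<subseteq> mu N" and q: "prime q" and inj: "inj_on (\<lambda>x. x ^ q) (mu N)"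
  shows "[card (prod_tuples C q z) = of_bool (z \<in> (\<lambda>x. x ^ q) ` C)] (mod q)"
proof -
  have fC: "finite C" using finite_subset[OF C mu_finite[OF N]] .
  have q0: "q > 0" using q prime_gt_0_nat by blast
  have "[card (prod_tuples C q z) = card {xs \<in> prod_tuples C q z. rotate1 xs = xs}] (mod q)"
    by (rule card_cong_fixed_points[OF q prod_tuples_finite[OF fC]])
      (auto simp: prod_tuples_def prod_list_rotate1 rotate_def[symmetric])
  also have "{xs \<in> prod_tuples C q z. rotate1 xs = xs} = (\<lambda>x. replicate q x) ` {x \<in> C. x ^ q = z}"
  proof (intro equalityI subsetI)
    fix xs assume xs: "xs \<in> {xs \<in> prod_tuples C q z. rotate1 xs = xs}"
    then obtain x where "xs = replicate q x"
      using rotate1_fixed_replicate unfolding prod_tuples_def by fastforce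
    then show "xs \<in> (\<lambda>x. replicate q x) ` {x \<in> C. x ^ q = z}"
      using xs q0 unfolding prod_tuples_def by auto
  next
    fix xs assume "xs \<in> (\<lambda>x. replicate q x) ` {x \<in> C. x ^ q = z}"
    moreover have "rotate1 (replicate q x) = replicate q x" for x :: complex
      using q0 by (metis Suc_pred replicate_Suc replicate_append_same rotate1.simps(2))
    ultimately show "xs \<in> {xs \<in> prod_tuples C q z. rotate1 xs = xs}"
      unfolding prod_tuples_def by auto
  qed
  also have "card \<dots> = card {x \<in> C. x ^ q = z}"
    by (rule card_image) (use q0 in \<open>auto simp: inj_on_def\<close>)
  also have "\<dots> = of_bool (z \<in> (\<lambda>x. x ^ q) ` C)"
  proof (cases "z \<in> (\<lambda>x. x ^ q) ` C")
    case True
    then obtain x where "x \<in> C" "z = x ^ q" by auto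
    then have "{x \<in> C. x ^ q = z} = {x}" using C inj unfolding inj_on_def by auto
    then show ?thesis using True by simp
  next
    case False
    then have none: "{x \<in> C. x ^ q = z} = {}" by auto
    show ?thesis using False unfolding none by simp
  qed
  finally show ?thesis .
qed

text \<open>A set is saturated for P when it is a union of parts: every part meeting it lies inside it.\<close>
definition saturated :: "complex set set \<Rightarrow> complex set \<Rightarrow> bool" where
  "saturated P X \<longleftrightarrow> (\<forall>D\<in>P. D \<inter> X \<noteq> {} \<longrightarrow> D \<subseteq> X)"

lemma part_saturated:
  assumes "unital_partition G P" "A \<in> P"
  shows "saturated P A"
  using assms unfolding saturated_def unital_partition_def by blast

text \<open>The coefficients of (a_C)^q are constant on each part D, and
  modulo q they are the indicator of C^q.\<close>
lemma part_power_prime_saturated: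
  assumes up: "unital_partition (mu N) P" and N: "N > 0" and C: "C \<in> P"
    and q: "prime q" and inj: "inj_on (\<lambda>x. x ^ q) (mu N)"
  shows "saturated P ((\<lambda>x. x ^ q) ` C)"
  unfolding saturated_def
proof (intro ballI impI subsetI)
  fix D w assume D: "D \<in> P" "D \<inter> (\<lambda>x. x ^ q) ` C \<noteq> {}" and w: "w \<in> D"
  then obtain z where z: "z \<in> D" "z \<in> (\<lambda>x. x ^ q) ` C" by blast
  have fP: "finite P" using unital_partition_finite[OF up N] .
  have CG: "C \<subseteq> mu N" and DG: "D \<subseteq> mu N"
    using unital_partition_part[OF up C] unital_partition_part[OF up D(1)] by auto
  obtain c where "\<forall>t\<in>D. class_sum_power (mu N) C q t = c"
    using zspan_constant_on_part[OF up fP class_sum_power_zspan[OF up fP C] D(1)] by blast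
  then have "card (prod_tuples C q z) = card (prod_tuples C q w)"
    using z w class_sum_power_count[OF N CG] DG by (metis subsetD of_nat_eq_iff)
  then have "[of_bool (z \<in> (\<lambda>x. x ^ q) ` C) = (of_bool (w \<in> (\<lambda>x. x ^ q) ` C) :: nat)] (mod q)"
    using prod_tuples_prime_cong[OF N CG q inj, of z] prod_tuples_prime_cong[OF N CG q inj, of w]
    by (metis cong_sym cong_trans)
  moreover have "q > 1" using q prime_gt_1_nat by blast
  ultimately show "w \<in> (\<lambda>x. x ^ q) ` C"
    using z(2) by (cases "w \<in> (\<lambda>x. x ^ q) ` C") (auto simp: cong_def)
qed

lemma saturated_power_prime:
  assumes up: "unital_partition (mu N) P" and N: "N > 0" and X: "X \<subseteq> mu N" "saturated P X"
    and q: "prime q" "coprime q N"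
  shows "saturated P ((\<lambda>x. x ^ q) ` X)"
  unfolding saturated_def
proof (intro ballI impI subsetI)
  fix D w assume D: "D \<in> P" "D \<inter> (\<lambda>x. x ^ q) ` X \<noteq> {}" and w: "w \<in> D"
  have inj: "inj_on (\<lambda>x. x ^ q) (mu N)"
    using mu_power_int_inj[OF N, of _ _ "int q"] q(2) by (intro inj_onI) (simp add: coprime_int_iff)
  obtain z x where zx: "z \<in> D" "x \<in> X" "z = x ^ q" using D by auto
  have "x \<noteq> 1" using zx unital_partition_part[OF up D(1)] by auto
  then have "x \<in> \<Union>P" using X zx up unfolding unital_partition_def by auto
  then obtain C where C: "C \<in> P" "x \<in> C" by blast
  have "C \<subseteq> X" using X(2) C zx unfolding saturated_def by blast
  moreover have "D \<subseteq> (\<lambda>x. x ^ q) ` C"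
    using part_power_prime_saturated[OF up N C(1) q(1) inj] D(1) zx C unfolding saturated_def by blast
  ultimately show "w \<in> (\<lambda>x. x ^ q) ` X" using w by blast
qed

lemma saturated_power:
  assumes up: "unital_partition (mu N) P" and N: "N > 1"
  shows "X \<subseteq> mu N \<Longrightarrow> saturated P X \<Longrightarrow> coprime M N \<Longrightarrow> saturated P ((\<lambda>x. x ^ M) ` X)"
proof (induction M arbitrary: X rule: less_induct)
  case (less M)
  show ?case
  proof (cases "M = 1")
    case True then show ?thesis using less.prems by simp
  next
    case False
    have "M \<noteq> 0"
    proof
      assume "M = 0"
      then have "N = 1" using less.prems(3) by simp
      with N show False by simp
    qed
    obtain q where q: "prime q" "q dvd M" using prime_factor_nat[OF False] by blast
    then obtain M' where M': "M = q * M'" by blast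
    have "M' < M" using M' \<open>M \<noteq> 0\<close> prime_gt_1_nat[OF q(1)] by simp
    have cM': "coprime M' N" "coprime q N" using less.prems(3) M' by auto
    have "saturated P ((\<lambda>x. x ^ M') ` X)" using less.IH[OF \<open>M' < M\<close> less.prems(1,2) cM'(1)] .
    moreover have "(\<lambda>x. x ^ M') ` X \<subseteq> mu N" using less.prems(1) mu_power by blast
    ultimately have "saturated P ((\<lambda>x. x ^ q) ` ((\<lambda>x. x ^ M') ` X))"
      using saturated_power_prime[OF up _ _ _ q(1) cM'(2)] N by simp
    also have "(\<lambda>x. x ^ q) ` ((\<lambda>x. x ^ M') ` X) = (\<lambda>x. x ^ M) ` X"
      by (simp add: image_image M' power_mult[symmetric] mult.commute)
    finally show ?thesis .
  qed
qed

lemma saturated_set_pow: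
  assumes up: "unital_partition (mu N) P" and N: "N > 1" and X: "X \<subseteq> mu N" "saturated P X"
    and m: "coprime m (int N)"
  shows "saturated P (set_pow X m)"
proof -
  have "set_pow X m = (\<lambda>x. x ^ nat (m mod int N)) ` X"
    unfolding set_pow_def using X(1) N mu_power_int[of N] by (intro image_cong refl) auto
  moreover have "coprime (nat (m mod int N)) N"
    using m N by (simp add: coprime_int_iff[symmetric])
  ultimately show ?thesis using saturated_power[OF up N X] by simp
qed

lemma set_pow_mult: "set_pow X (a * b) = set_pow (set_pow X a) b"
  unfolding set_pow_def image_image by (simp add: power_int_mult)

lemma set_pow_mem_iff:
  assumes "N > 0" "X \<subseteq> mu N" "v \<in> mu N" "coprime m (int N)"
  shows "v powi m \<in> set_pow X m \<longleftrightarrow> v \<in> X"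
  using assms mu_power_int_inj[OF assms(1) assms(3) _ assms(4)] unfolding set_pow_def by blast

lemma part_set_pow_fixed:
  assumes up: "unital_partition (mu N) P" and N: "N > 1" and A: "A \<in> P"
    and m: "coprime m (int N)" and meet: "A \<inter> set_pow A m \<noteq> {}"
  shows "set_pow A (m ^ j) = A"
proof -
  have AG: "A \<subseteq> mu N" using unital_partition_part[OF up A] by auto
  have fA: "finite A" using finite_subset[OF AG mu_finite] N by simp
  have "saturated P (set_pow A m)" using saturated_set_pow[OF up N AG part_saturated[OF up A] m] .
  then have "A \<subseteq> set_pow A m" using A meet unfolding saturated_def by blast
  moreover have "card (set_pow A m) \<le> card A" unfolding set_pow_def by (rule card_image_le[OF fA])
  ultimately have fixed: "set_pow A m = A"
    using fA by (metis card_seteq finite_imageI set_pow_def)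
  show ?thesis
  proof (induction j)
    case 0 then show ?case by (simp add: set_pow_def)
  next
    case (Suc j) then show ?case by (simp add: set_pow_mult fixed)
  qed
qed

lemma euler_theorem_int:
  assumes "coprime a (int M)"
  shows "[a ^ totient M = 1] (mod int M)"
proof (cases "M > 1")
  case True
  then have "residues (int M)" unfolding residues_def by simp
  from residues.euler_theorem[OF this assms] show ?thesis by simp
next
  case False
  then have "M = 0 \<or> M = 1" by auto
  then show ?thesis by auto
qed

lemma part_orbit_exponent:
  assumes up: "unital_partition (mu N) P" and N: "N > 1" and A: "A \<in> P" "y \<in> A"
    and \<alpha>: "coprime \<alpha> (int N)"
    and u: "u = (LEAST u::nat. 0 < u \<and> y powi (\<alpha> ^ u) \<in> A)"
  shows "0 < u" "\<And>j. set_pow A ((\<alpha> ^ u) ^ j) = A" "\<And>i. y powi (\<alpha> ^ i) \<in> A \<Longrightarrow> u dvd i"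
proof -
  have AG: "A \<subseteq> mu N" using unital_partition_part[OF up A(1)] by auto
  have yG: "y \<in> mu N" using A(2) AG by auto
  have "y powi (\<alpha> ^ totient N) = y"
    using power_int_cong[OF mu_nonzero[OF _ yG] _ euler_theorem_int[OF \<alpha>]] N yG by (simp add: mu_def)
  then have ex: "\<exists>u. 0 < u \<and> y powi (\<alpha> ^ u) \<in> A"
    using A(2) N by (intro exI[of _ "totient N"]) auto
  have u0: "0 < u" and yu: "y powi (\<alpha> ^ u) \<in> A" using LeastI_ex[OF ex] unfolding u by auto
  have unit: "coprime ((\<alpha> ^ u) ^ j) (int N)" for j using \<alpha> by simp
  have fixed: "set_pow A ((\<alpha> ^ u) ^ j) = A" for j
    using part_set_pow_fixed[OF up N A(1) unit[of 1]] yu A(2) unfolding set_pow_def by auto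
  show "0 < u" "set_pow A ((\<alpha> ^ u) ^ j) = A" for j using u0 fixed by auto
  show "u dvd i" if i: "y powi (\<alpha> ^ i) \<in> A" for i
  proof -
    have "\<alpha> ^ i = \<alpha> ^ (i mod u) * (\<alpha> ^ u) ^ (i div u)"
      by (simp flip: power_mult power_add)
    then have "y powi (\<alpha> ^ i) = (y powi (\<alpha> ^ (i mod u))) powi ((\<alpha> ^ u) ^ (i div u))"
      by (simp add: power_int_mult)
    then have "y powi (\<alpha> ^ (i mod u)) \<in> A"
      using i set_pow_mem_iff[OF _ AG mu_power_int_closed[OF _ yG] unit] fixed N by auto
    then have "\<not> i mod u < u \<or> i mod u = 0"
      using not_less_Least[of "i mod u" "\<lambda>u. 0 < u \<and> y powi (\<alpha> ^ u) \<in> A"] u by auto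
    then show ?thesis using u0 by auto
  qed
qed

lemma power_int_exp_mod:
  fixes y :: complex
  assumes "y \<noteq> 0" "y ^ K = 1" "[\<alpha> ^ L = 1] (mod int K)"
  shows "y powi (\<alpha> ^ i) = y powi (\<alpha> ^ (i mod L))"
proof -
  have "\<alpha> ^ i = \<alpha> ^ (i mod L) * (\<alpha> ^ L) ^ (i div L)"
    by (simp flip: power_mult power_add)
  also have "[\<dots> = \<alpha> ^ (i mod L) * 1 ^ (i div L)] (mod int K)"
    by (intro cong_mult cong_refl cong_pow assms(3))
  finally show ?thesis using power_int_cong[OF assms(1,2)] by simp
qed

lemma Bset_order:
  assumes "y \<in> Bset (mu (p ^ n)) p k" "k \<le> n" "p > 0"
  shows "y ^ (p ^ (n - k)) = 1"
proof -
  obtain w where w: "is_generator (mu (p ^ n)) w" "y = w ^ (p ^ k)"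
    using assms(1) unfolding Bset_def by blast
  have "p ^ k * p ^ (n - k) = p ^ n" using assms(2) by (simp flip: power_add)
  then have "y ^ (p ^ (n - k)) = w ^ (p ^ n)" by (simp only: w(2) power_mult[symmetric])
  then show ?thesis using generator_basic(3)[OF _ w(1)] assms(3) by simp
qed

lemma Bset_exponent_period:
  assumes p: "prime p" and k: "k \<le> n" and \<alpha>: "generates_units (p ^ n) \<alpha>"
    and y: "y \<in> Bset (mu (p ^ n)) p k"
  shows "y powi (\<alpha> ^ i) = y powi (\<alpha> ^ (i mod totient (p ^ (n - k))))"
proof -
  have p0: "p > 0" using p prime_gt_0_nat by blast
  have "int (p ^ (n - k)) dvd int (p ^ n)" by (simp add: le_imp_power_dvd)
  then have "coprime \<alpha> (int (p ^ (n - k)))"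
    using \<alpha> coprime_divisors[OF dvd_refl] unfolding generates_units_def by blast
  moreover have "y ^ (p ^ (n - k)) = 1" using Bset_order[OF y k p0] .
  moreover from this have "y \<noteq> 0" using p0 by (auto simp: power_0_left)
  ultimately show ?thesis using power_int_exp_mod euler_theorem_int by blast
qed

lemma Bset_orbit:
  assumes p: "prime p" and k: "k \<le> n" and \<alpha>: "generates_units (p ^ n) \<alpha>"
    and y: "y \<in> Bset (mu (p ^ n)) p k" and z: "z \<in> Bset (mu (p ^ n)) p k"
  shows "\<exists>i < totient (p ^ (n - k)). z = y powi (\<alpha> ^ i)"
proof -
  define N where "N = p ^ n"
  have N: "N > 0" using p prime_gt_0_nat unfolding N_def by simp
  obtain w where w: "is_generator (mu N) w" "y = w ^ (p ^ k)" using y unfolding Bset_def N_def by blast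
  obtain x where x: "is_generator (mu N) x" "z = x ^ (p ^ k)" using z unfolding Bset_def N_def by blast
  obtain a where a: "x = w ^ a" using w(1) x(1) unfolding is_generator_def by blast
  have "coprime a N" using generator_power_coprime[OF N w(1)] x(1) a by simp
  then have "coprime (int a) (int N)" by simp
  then obtain i where i: "[\<alpha> ^ i = int a] (mod int N)"
    using \<alpha> unfolding generates_units_def N_def by blast
  have "y \<in> mu N" using mu_power[OF generator_basic(1)[OF N w(1)]] w(2) by simp
  then have yN: "y \<noteq> 0" "y ^ N = 1" using mu_nonzero[OF N] by (auto simp: mu_def)
  have "z = y ^ a" using x(2) a w(2) by (simp flip: power_mult add: mult.commute)
  also have "\<dots> = y powi (\<alpha> ^ i)" using power_int_cong[OF yN i] by simp
  also have "\<dots> = y powi (\<alpha> ^ (i mod totient (p ^ (n - k))))"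
    using Bset_exponent_period[OF p k \<alpha> y] .
  finally show ?thesis using p prime_gt_0_nat by (intro exI conjI[rotated]) auto
qed

lemma mu_prime_power_in_Bset:
  assumes p: "prime p" and w: "is_generator (mu (p ^ n)) w" and z: "z \<in> mu (p ^ n)" "z \<noteq> 1"
  shows "\<exists>l<n. z \<in> Bset (mu (p ^ n)) p l"
proof -
  define N where "N = p ^ n"
  have p1: "p > 1" using p prime_gt_1_nat by blast
  have N: "N > 0" using p1 unfolding N_def by simp
  obtain j where "z = w ^ j" using w z unfolding is_generator_def by blast
  then have zj: "z = w ^ (j mod N)"
    using power_mod_order generator_basic(3)[OF N w[folded N_def]] by metis
  then have j0: "j mod N \<noteq> 0" using z(2) by (metis power_0)
  define l where "l = multiplicity p (j mod N)"
  obtain e where e: "j mod N = p ^ l * e" "\<not> p dvd e"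
    using multiplicity_decompose'[of "j mod N" p] j0 p1 unfolding l_def by auto
  have "p ^ l < p ^ n" using e j0 N dvd_imp_le[of "p ^ l" "j mod N"] unfolding N_def
    by (metis dvd_triv_left le_less_trans mod_less_divisor neq0_conv)
  then have ln: "l < n" using power_less_imp_less_exp[OF p1] by blast
  have "coprime e N" using prime_imp_coprime[OF p e(2)] unfolding N_def by (simp add: coprime_commute)
  then have "is_generator (mu N) (w ^ e)" using generator_power[OF N w[folded N_def]] by blast
  moreover have "z = (w ^ e) ^ (p ^ l)" using zj e(1) by (simp flip: power_mult add: mult.commute)
  ultimately show ?thesis using ln unfolding Bset_def N_def by blast
qed

lemma part_within_Bset:
  assumes p: "prime p" and w: "is_generator (mu (p ^ n)) w" and up: "unital_partition (mu (p ^ n)) P"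
    and disj: "\<forall>l\<le>n. l \<noteq> k \<longrightarrow> Pset (mu (p ^ n)) P p k \<inter> Pset (mu (p ^ n)) P p l = {}"
    and A: "A \<in> Pset (mu (p ^ n)) P p k"
  shows "A \<subseteq> Bset (mu (p ^ n)) p k"
proof
  fix z assume zA: "z \<in> A"
  have "A \<in> P" using A unfolding Pset_def by simp
  then have "z \<in> mu (p ^ n)" "z \<noteq> 1" using unital_partition_part[OF up] zA by auto
  then obtain l where l: "l < n" "z \<in> Bset (mu (p ^ n)) p l" using mu_prime_power_in_Bset[OF p w] by blast
  then have "A \<in> Pset (mu (p ^ n)) P p l" using zA A unfolding Pset_def by blast
  then have "l = k" using disj A l(1) by (meson disjoint_iff less_imp_le)
  then show "z \<in> Bset (mu (p ^ n)) p k" using l(2) by simp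
qed

lemma part_eq_Bset_orbit:
  assumes p: "prime p" and \<alpha>: "generates_units (p ^ n) \<alpha>"
    and up: "unital_partition (mu (p ^ n)) P" and k: "k \<le> n"
    and disj: "\<forall>l\<le>n. l \<noteq> k \<longrightarrow> Pset (mu (p ^ n)) P p k \<inter> Pset (mu (p ^ n)) P p l = {}"
    and A: "A \<in> Pset (mu (p ^ n)) P p k" and y: "y \<in> A \<inter> Bset (mu (p ^ n)) p k"
    and u: "u = (LEAST u::nat. 0 < u \<and> y powi (\<alpha> ^ u) \<in> A)"
  shows "{y powi ((\<alpha> ^ u) ^ j) | j. j \<le> totient (p ^ (n - k)) div u - 1} = A"
proof -
  define N where "N = p ^ n"
  define L where "L = totient (p ^ (n - k))"
  have AP: "A \<in> P" using A unfolding Pset_def by simp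
  have "y \<in> mu N - {1}" using unital_partition_part[OF up AP] y unfolding N_def by auto
  have N: "N > 1"
  proof (rule ccontr)
    assume "\<not> N > 1"
    moreover have "N > 0" using p prime_gt_0_nat unfolding N_def by simp
    ultimately have "N = 1" by simp
    then show False using \<open>y \<in> mu N - {1}\<close> by (simp add: mu_def)
  qed
  have \<alpha>N: "coprime \<alpha> (int N)" using \<alpha> unfolding generates_units_def N_def by simp
  have yA: "y \<in> A" and yB: "y \<in> Bset (mu (p ^ n)) p k" using y by auto
  note orbit = part_orbit_exponent[OF up[folded N_def] N AP yA \<alpha>N u]
  have "u dvd L"
    using orbit(3)[of L] Bset_exponent_period[OF p k \<alpha> yB, of L] y unfolding L_def by simp
  then obtain d where d: "L = u * d" by blast
  show ?thesis
    unfolding L_def[symmetric]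
  proof (intro equalityI subsetI)
    fix z assume "z \<in> {y powi ((\<alpha> ^ u) ^ j) | j. j \<le> L div u - 1}"
    then show "z \<in> A" using orbit(2) y unfolding set_pow_def by blast
  next
    fix z assume "z \<in> A"
    then have "z \<in> Bset (mu (p ^ n)) p k" using part_within_Bset[OF p _ up disj A] yB
      unfolding Bset_def by blast
    then obtain i where i: "i < L" "z = y powi (\<alpha> ^ i)"
      using Bset_orbit[OF p k \<alpha> yB] unfolding L_def by blast
    then obtain c where c: "i = u * c" using orbit(3) \<open>z \<in> A\<close> by blast
    then have "c \<le> L div u - 1" using i(1) d orbit(1) by simp
    moreover have "z = y powi ((\<alpha> ^ u) ^ c)" using i(2) c by (simp add: power_mult)
    ultimately show "z \<in> {y powi ((\<alpha> ^ u) ^ j) | j. j \<le> L div u - 1}" by blast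
  qed
qed

theorem corollary3p9:
  fixes p n k :: nat and \<alpha> :: int and P :: "complex set set" and A :: "complex set" and y :: complex
  assumes "prime p" and "odd p"
    and "generates_units (p ^ n) \<alpha>"
    and "unital_partition (mu (p ^ n)) P"
    and "k \<le> n"
    and "\<forall>l\<le>n. l \<noteq> k \<longrightarrow> Pset (mu (p ^ n)) P p k \<inter> Pset (mu (p ^ n)) P p l = {}"
    and "A \<in> Pset (mu (p ^ n)) P p k"
    and "y \<in> A \<inter> Bset (mu (p ^ n)) p k"
  shows "let u = (LEAST u::nat. 0 < u \<and> y powi (\<alpha> ^ u) \<in> A);
             \<beta> = \<alpha> ^ u;
             r = totient (p ^ (n - k)) div u - 1;
             B0 = {y powi (\<beta> ^ j) | j. j \<le> r}
         in \<forall>i::nat. set_pow B0 (\<alpha> ^ i) = set_pow A (\<alpha> ^ i)"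
proof -
  define u where "u = (LEAST u::nat. 0 < u \<and> y powi (\<alpha> ^ u) \<in> A)"
  have "{y powi ((\<alpha> ^ u) ^ j) | j. j \<le> totient (p ^ (n - k)) div u - 1} = A"
    using part_eq_Bset_orbit[OF assms(1,3-8) u_def] .
  then show ?thesis by (simp add: Let_def u_def)
qed

end
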